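(* For integers $f \geq 1$, $\ell \geq 1$ and $q \geq 1$, let $N_q(f,\ell)$ be the number of numerical semigroups with Frobenius number $f$, multiplicity $\ell+1$, and depth $q$; for $j \geq 1$ let $S(j)$ be the number of numerical semigroups with multiplicity $j+1$ and Frobenius number $3j+2$. Then: (i) $N_2(f,\ell) = 2^{f-2-\ell}$ when $(f-1)/2 \leq \ell \leq f-2$; (ii) $N_3(f,\ell) = 2^{\ell - j} \cdot S(j)$ when $(f-2)/3 \leq \ell \leq (f-3)/2$, where $j = f - 2 - 2\ell$. For all other $\ell$, $N_2(f,\ell) = 0$ and $N_3(f,\ell) = 0$, respectively.
   Context: A numerical semigroup is a subset $\Lambda \subseteq \mathbb{N}_0$ containing $0$, closed under addition, with finite complement. Its multiplicity is $m(\Lambda) = \min(\Lambda \setminus \{0\})$, its conductor $c(\Lambda)$ is the least $c \in \mathbb{N}_0$ with $c + \mathbb{N}_0 \subseteq \Lambda$, its Frobenius number is $c(\Lambda)-1$, and its depth is $\lceil c(\Lambda)/m(\Lambda) \rceil$. *)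

theory Defs
  imports Complex_Main
begin

definition numerical_semigroup :: "nat set \<Rightarrow> bool" where
  "numerical_semigroup S \<longleftrightarrow> 0 \<in> S \<and> (\<forall>a\<in>S. \<forall>b\<in>S. a + b \<in> S) \<and> finite (UNIV - S)"

definition multiplicity :: "nat set \<Rightarrow> nat" where
  "multiplicity S = (LEAST x. x \<in> S \<and> x \<noteq> 0)"

definition conductor :: "nat set \<Rightarrow> nat" where
  "conductor S = (LEAST c. \<forall>n\<ge>c. n \<in> S)"

text \<open>Frobenius number = conductor - 1 (as an integer, so that it is -1 for S = N).\<close>
definition frobenius :: "nat set \<Rightarrow> int" where
  "frobenius S = int (conductor S) - 1"

definition depth :: "nat set \<Rightarrow> nat" where
  "depth S = nat \<lceil>real (conductor S) / real (multiplicity S)\<rceil>"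

definition N_count :: "nat \<Rightarrow> nat \<Rightarrow> nat \<Rightarrow> nat" where
  "N_count q f l = card {S. numerical_semigroup S \<and> frobenius S = int f
      \<and> multiplicity S = l + 1 \<and> depth S = q}"

definition S_count :: "nat \<Rightarrow> nat" where
  "S_count j = card {S. numerical_semigroup S \<and> multiplicity S = j + 1
      \<and> frobenius S = int (3 * j + 2)}"

end

theory Submission
  imports Defs
begin

text \<open>A numerical semigroup of multiplicity \<open>m\<close> and Frobenius number \<open>f\<close> has depth \<open>q\<close> exactly
  when \<open>(q - 1) m < f < q m\<close>, because multiples of \<open>m\<close> are never gaps. If \<open>m < f < 2m\<close>,
  any two nonzero elements sum past \<open>f\<close>, so the semigroup is \<open>{0, m}\<close> plus an arbitrary
  subset of \<open>(m, f)\<close> plus everything above \<open>f\<close>. If \<open>f = 2m + j\<close> with \<open>0 < j < m\<close>, only sums of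
  two elements below \<open>2m\<close> can fall below \<open>f\<close>: the elements \<open>m + c\<close> with \<open>j < c < m\<close> are
  unconstrained, and the remaining elements below \<open>f\<close> form a pair of sets that does not
  depend on \<open>m\<close>. For \<open>m = j + 1\<close> there are no unconstrained elements, so the number of such
  pairs is \<open>S(j)\<close>.\<close>

definition numerical_semigroup_fm :: "nat \<Rightarrow> nat \<Rightarrow> nat set \<Rightarrow> bool" where
  "numerical_semigroup_fm f m S \<longleftrightarrow> 0 \<in> S \<and> (\<forall>a\<in>S. \<forall>b\<in>S. a + b \<in> S)
     \<and> 0 < m \<and> m \<in> S \<and> (\<forall>x. 0 < x \<and> x < m \<longrightarrow> x \<notin> S) \<and> f \<notin> S \<and> (\<forall>n>f. n \<in> S)"

lemma conductor_eqI:
  assumes "f \<notin> S" and "\<forall>n>f. n \<in> S"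
  shows "conductor S = f + 1"
  unfolding conductor_def
proof (rule Least_equality)
  show "\<forall>n\<ge>f + 1. n \<in> S" using assms(2) by simp
  show "f + 1 \<le> c" if "\<forall>n\<ge>c. n \<in> S" for c
    using that assms(1) by (metis not_less_eq_eq Suc_eq_plus1)
qed

lemma multiplicity_eqI:
  assumes "0 < m" and "m \<in> S" and "\<forall>x. 0 < x \<and> x < m \<longrightarrow> x \<notin> S"
  shows "multiplicity S = m"
  unfolding multiplicity_def
  by (rule Least_equality) (use assms in \<open>auto intro: leI\<close>)

lemma numerical_semigroup_ge_conductor:
  assumes "numerical_semigroup S" and "n \<ge> conductor S"
  shows "n \<in> S"
proof -
  obtain N where "\<forall>x\<in>UNIV - S. x \<le> N"
    using assms(1) finite_nat_set_iff_bounded_le by (auto simp: numerical_semigroup_def)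
  then have "\<forall>n\<ge>Suc N. n \<in> S" by force
  then show ?thesis
    using LeastI_ex[of "\<lambda>c. \<forall>n\<ge>c. n \<in> S"] assms(2) unfolding conductor_def by blast
qed

lemma conductor_pred_notin:
  assumes "numerical_semigroup S" and "conductor S = f + 1"
  shows "f \<notin> S"
proof
  assume "f \<in> S"
  then have "\<forall>n\<ge>f. n \<in> S"
    using numerical_semigroup_ge_conductor[OF assms(1)] assms(2)
    by (metis Suc_eq_plus1 le_antisym not_less_eq_eq)
  then show False
    using not_less_Least[of f "\<lambda>c. \<forall>n\<ge>c. n \<in> S"] assms(2) unfolding conductor_def by simp
qed

lemma numerical_semigroup_multiplicity:
  assumes "numerical_semigroup S"
  shows "multiplicity S \<in> S" and "0 < multiplicity S"
    and "0 < x \<Longrightarrow> x < multiplicity S \<Longrightarrow> x \<notin> S"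
proof -
  have "\<exists>x. x \<in> S \<and> x \<noteq> 0"
    using numerical_semigroup_ge_conductor[OF assms, of "Suc (conductor S)"] by auto
  then show "multiplicity S \<in> S" and "0 < multiplicity S"
    using LeastI_ex[of "\<lambda>x. x \<in> S \<and> x \<noteq> 0"] unfolding multiplicity_def by auto
  show "x \<notin> S" if "0 < x" "x < multiplicity S"
    using that not_less_Least[of x "\<lambda>x. x \<in> S \<and> x \<noteq> 0"] unfolding multiplicity_def by auto
qed

lemma numerical_semigroup_fm_iff:
  "numerical_semigroup_fm f m S
     \<longleftrightarrow> numerical_semigroup S \<and> frobenius S = int f \<and> multiplicity S = m"
proof
  assume "numerical_semigroup_fm f m S"
  then have S: "0 \<in> S" "\<forall>a\<in>S. \<forall>b\<in>S. a + b \<in> S" "0 < m" "m \<in> S"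
    "\<forall>x. 0 < x \<and> x < m \<longrightarrow> x \<notin> S" "f \<notin> S" "\<forall>n>f. n \<in> S"
    unfolding numerical_semigroup_fm_def by blast+
  have "UNIV - S \<subseteq> {..f}"
    using S(7) not_less by blast
  then have "numerical_semigroup S"
    using S(1,2) finite_subset unfolding numerical_semigroup_def by blast
  moreover have "frobenius S = int f"
    using conductor_eqI[OF S(6,7)] by (simp add: frobenius_def)
  ultimately show "numerical_semigroup S \<and> frobenius S = int f \<and> multiplicity S = m"
    using multiplicity_eqI[OF S(3-5)] by blast
next
  assume S: "numerical_semigroup S \<and> frobenius S = int f \<and> multiplicity S = m"
  then have "conductor S = f + 1" by (simp add: frobenius_def)
  then show "numerical_semigroup_fm f m S"
    using S numerical_semigroup_ge_conductor[of S] conductor_pred_notin[of S f]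
      numerical_semigroup_multiplicity[of S]
    unfolding numerical_semigroup_fm_def numerical_semigroup_def by (metis Suc_eq_plus1 Suc_leI)
qed

lemma numerical_semigroup_fm_mult_mem:
  assumes "numerical_semigroup_fm f m S"
  shows "k * m \<in> S"
  using assms by (induction k) (auto simp: numerical_semigroup_fm_def)

lemma nat_ceiling_divide_eq_iff:
  fixes c m q :: nat
  assumes "0 < m" and "0 < c"
  shows "nat \<lceil>real c / real m\<rceil> = q \<longleftrightarrow> (q - 1) * m < c \<and> c \<le> q * m"
proof (cases "q = 0")
  case True
  have "\<not> real c / real m \<le> 0" using assms by (simp add: divide_le_0_iff)
  with True show ?thesis by auto
next
  case False
  then have "nat z = q \<longleftrightarrow> z = int q" for z
    by auto
  then have "nat \<lceil>real c / real m\<rceil> = q \<longleftrightarrow> \<lceil>real c / real m\<rceil> = int q" .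
  also have "\<dots> \<longleftrightarrow> real q - 1 < real c / real m \<and> real c / real m \<le> real q"
    by (simp add: ceiling_eq_iff)
  also have "\<dots> \<longleftrightarrow> real (q - 1) * real m < real c \<and> real c \<le> real q * real m"
    using False assms by (simp add: of_nat_diff pos_less_divide_eq pos_divide_le_eq)
  also have "\<dots> \<longleftrightarrow> (q - 1) * m < c \<and> c \<le> q * m"
    by (simp only: of_nat_mult[symmetric] of_nat_less_iff of_nat_le_iff)
  finally show ?thesis .
qed

lemma depth_numerical_semigroup_fm:
  assumes "numerical_semigroup_fm f m S"
  shows "depth S = q \<longleftrightarrow> (q - 1) * m < f \<and> f < q * m"
proof -
  have m: "0 < m" "multiplicity S = m" and c: "conductor S = f + 1"
    using assms numerical_semigroup_fm_iff[of f m S]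
    by (auto simp: numerical_semigroup_fm_def frobenius_def)
  have "f \<noteq> k * m" for k
    using numerical_semigroup_fm_mult_mem[OF assms, of k] assms
    unfolding numerical_semigroup_fm_def by auto
  then have "f \<noteq> (q - 1) * m" "f \<noteq> q * m" by blast+
  moreover have "depth S = q \<longleftrightarrow> (q - 1) * m < f + 1 \<and> f + 1 \<le> q * m"
    using nat_ceiling_divide_eq_iff[OF m(1), of "f + 1" q] m c unfolding depth_def by simp
  ultimately show ?thesis by linarith
qed

lemma N_count_eq:
  "N_count q f l = (if (q - 1) * (l + 1) < f \<and> f < q * (l + 1)
                    then card {S. numerical_semigroup_fm f (l + 1) S} else 0)"
proof -
  have "{S. numerical_semigroup S \<and> frobenius S = int f \<and> multiplicity S = l + 1 \<and> depth S = q}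
      = {S. numerical_semigroup_fm f (l + 1) S \<and> (q - 1) * (l + 1) < f \<and> f < q * (l + 1)}"
    using numerical_semigroup_fm_iff depth_numerical_semigroup_fm by blast
  then show ?thesis
    unfolding N_count_def by auto
qed

lemma S_count_eq: "S_count j = card {S. numerical_semigroup_fm (3 * j + 2) (j + 1) S}"
  unfolding S_count_def numerical_semigroup_fm_iff by meson

lemma card_numerical_semigroup_fm_depth_two:
  assumes "m < f" and "f < 2 * m"
  shows "card {S. numerical_semigroup_fm f m S} = 2 ^ (f - m - 1)"
proof -
  let ?sg = "\<lambda>X. {0, m} \<union> X \<union> {f<..}"
  have "bij_betw ?sg (Pow {m<..<f}) {S. numerical_semigroup_fm f m S}"
  proof (rule bij_betw_byWitness[where f' = "\<lambda>S. S \<inter> {m<..<f}"])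
    show "\<forall>X\<in>Pow {m<..<f}. ?sg X \<inter> {m<..<f} = X"
      by auto
    show "\<forall>S\<in>{S. numerical_semigroup_fm f m S}. ?sg (S \<inter> {m<..<f}) = S"
      by (auto simp: numerical_semigroup_fm_def nat_neq_iff)
    show "(\<lambda>S. S \<inter> {m<..<f}) ` {S. numerical_semigroup_fm f m S} \<subseteq> Pow {m<..<f}"
      by auto
    have "a + b \<in> ?sg X" if X: "X \<subseteq> {m<..<f}" and ab: "a \<in> ?sg X" "b \<in> ?sg X" for X a b
    proof (cases "a = 0 \<or> b = 0")
      case False
      then have "m \<le> a" "m \<le> b" using X ab assms by auto
      then show ?thesis using assms by simp
    qed (use ab in auto)
    then show "?sg ` Pow {m<..<f} \<subseteq> {S. numerical_semigroup_fm f m S}"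
      using assms by (auto simp: numerical_semigroup_fm_def)
  qed
  then have "card {S. numerical_semigroup_fm f m S} = card (Pow {m<..<f})"
    by (simp add: bij_betw_same_card)
  then show ?thesis
    by (simp add: card_Pow)
qed

text \<open>For a semigroup of multiplicity \<open>m\<close> and Frobenius number \<open>2m + j\<close>, the pair
  \<open>(A, B)\<close> records which of \<open>m + 1, \<dots>, m + j - 1\<close> and \<open>2m + 1, \<dots>, 2m + j - 1\<close>
  are elements; the conditions express closure under addition below the Frobenius number.\<close>

definition depth_three_cores :: "nat \<Rightarrow> (nat set \<times> nat set) set" where
  "depth_three_cores j = {(A, B). A \<subseteq> B \<and> B \<subseteq> {0<..<j}
     \<and> (\<forall>x\<in>A. \<forall>y\<in>A. x + y \<noteq> j \<and> (x + y < j \<longrightarrow> x + y \<in> B))}"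

definition depth_three_semigroup :: "nat \<Rightarrow> nat \<Rightarrow> nat set \<Rightarrow> nat set \<Rightarrow> nat set \<Rightarrow> nat set" where
  "depth_three_semigroup m j A B C =
     {0, m, 2 * m} \<union> (+) m ` (A \<union> C) \<union> (+) (2 * m) ` B \<union> {2 * m + j<..}"

lemma numerical_semigroup_fm_depth_three_semigroup:
  assumes j: "0 < j" "j < m" and AB: "(A, B) \<in> depth_three_cores j" and C: "C \<subseteq> {j<..<m}"
  shows "numerical_semigroup_fm (2 * m + j) m (depth_three_semigroup m j A B C)"
proof -
  let ?S = "depth_three_semigroup m j A B C"
  have A: "A \<subseteq> B" "B \<subseteq> {0<..<j}"
    "\<And>x y. x \<in> A \<Longrightarrow> y \<in> A \<Longrightarrow> x + y \<noteq> j \<and> (x + y < j \<longrightarrow> x + y \<in> B)"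
    using AB unfolding depth_three_cores_def by auto
  have low: "\<exists>x \<in> insert 0 (A \<union> C). a = m + x" if "a \<in> ?S" "a \<noteq> 0" "a < 2 * m" for a
    using that j by (auto simp: depth_three_semigroup_def)
  have ge: "m \<le> a" if "a \<in> ?S" "a \<noteq> 0" for a
    using that j by (auto simp: depth_three_semigroup_def)
  have closed: "a + b \<in> ?S" if ab: "a \<in> ?S" "b \<in> ?S" for a b
  proof (cases "a = 0 \<or> b = 0 \<or> 2 * m + j < a + b")
    case True
    then show ?thesis using ab by (auto simp: depth_three_semigroup_def)
  next
    case False
    then have "m \<le> a" "m \<le> b" using ge ab by auto
    with False j have "a < 2 * m" "b < 2 * m" by auto
    then obtain x y where x: "x \<in> insert 0 (A \<union> C)" "a = m + x"
      and y: "y \<in> insert 0 (A \<union> C)" "b = m + y"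
      using low ab False by meson
    have "x + y \<le> j" using False x y by simp
    then have "x \<in> insert 0 A" "y \<in> insert 0 A" using x y C by auto
    then have "x + y \<in> insert 0 B"
      using A \<open>x + y \<le> j\<close> by (auto simp: le_less)
    then show ?thesis using x y by (auto simp: depth_three_semigroup_def algebra_simps)
  qed
  have "2 * m + j \<notin> ?S"
    using j A(1,2) C by (auto simp: depth_three_semigroup_def)
  then show ?thesis
    unfolding numerical_semigroup_fm_def
    using closed j by (auto simp: depth_three_semigroup_def)
qed

lemma numerical_semigroup_fm_depth_three_cores:
  assumes S: "numerical_semigroup_fm (2 * m + j) m S"
  shows "((+) m -` S \<inter> {0<..<j}, (+) (2 * m) -` S \<inter> {0<..<j}) \<in> depth_three_cores j"
proof -
  have "m \<in> S" and frob: "2 * m + j \<notin> S"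
    and closed: "\<And>a b. a \<in> S \<Longrightarrow> b \<in> S \<Longrightarrow> a + b \<in> S"
    using S unfolding numerical_semigroup_fm_def by auto
  have sum: "2 * m + (x + y) \<in> S" if "m + x \<in> S" "m + y \<in> S" for x y
  proof -
    have "(m + x) + (m + y) \<in> S" using closed[OF that] .
    also have "(m + x) + (m + y) = 2 * m + (x + y)" by simp
    finally show ?thesis .
  qed
  have "2 * m + x \<in> S" if "m + x \<in> S" for x
    using sum[of 0 x] \<open>m \<in> S\<close> that by simp
  then show ?thesis
    unfolding depth_three_cores_def using sum frob by auto
qed

lemma numerical_semigroup_fm_eq_depth_three_semigroup:
  assumes j: "j < m" and S: "numerical_semigroup_fm (2 * m + j) m S"
  shows "S = depth_three_semigroup m j ((+) m -` S \<inter> {0<..<j}) ((+) (2 * m) -` S \<inter> {0<..<j})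
               ((+) m -` S \<inter> {j<..<m})" (is "S = ?D")
proof (intro set_eqI iffI)
  have S_props: "0 \<in> S" "m \<in> S" "\<And>x. 0 < x \<Longrightarrow> x < m \<Longrightarrow> x \<notin> S" "2 * m + j \<notin> S"
    "\<And>n. 2 * m + j < n \<Longrightarrow> n \<in> S" "\<And>a b. a \<in> S \<Longrightarrow> b \<in> S \<Longrightarrow> a + b \<in> S"
    using S unfolding numerical_semigroup_fm_def by auto
  have "2 * m \<in> S"
    using numerical_semigroup_fm_mult_mem[OF S, of 2] .
  have "m + j \<notin> S"
    using S_props(2,4) S_props(6)[of m "m + j"] by (auto simp: mult_2 add.assoc)
  fix x
  show "x \<in> S" if "x \<in> ?D"
    using that S_props \<open>2 * m \<in> S\<close> by (auto simp: depth_three_semigroup_def)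
  assume "x \<in> S"
  consider "x = 0" | "0 < x" "x < m" | a where "x = m + a" "a < m" | b where "x = 2 * m + b"
    by (metis add_diff_inverse_nat gr0I less_diff_conv2 mult_2 not_less)
  then show "x \<in> ?D"
  proof cases
    case 3
    then show ?thesis using \<open>x \<in> S\<close> \<open>m + j \<notin> S\<close>
      by (cases a j rule: linorder_cases) (auto simp: depth_three_semigroup_def)
  next
    case 4
    then show ?thesis using \<open>x \<in> S\<close> S_props(4)
      by (cases b j rule: linorder_cases) (auto simp: depth_three_semigroup_def)
  qed (use \<open>x \<in> S\<close> S_props in \<open>auto simp: depth_three_semigroup_def\<close>)
qed

lemma card_numerical_semigroup_fm_depth_three:
  assumes "0 < j" and "j < m"
  shows "card {S. numerical_semigroup_fm (2 * m + j) m S}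
           = card (depth_three_cores j) * 2 ^ (m - 1 - j)"
proof -
  let ?sg = "\<lambda>((A, B), C). depth_three_semigroup m j A B C"
  let ?slices = "\<lambda>S. (((+) m -` S \<inter> {0<..<j}, (+) (2 * m) -` S \<inter> {0<..<j}),
                        (+) m -` S \<inter> {j<..<m})"
  let ?P = "depth_three_cores j \<times> Pow {j<..<m}"
  have "bij_betw ?sg ?P {S. numerical_semigroup_fm (2 * m + j) m S}"
  proof (rule bij_betw_byWitness[where f' = ?slices])
    show "\<forall>p\<in>?P. ?slices (?sg p) = p"
      using assms by (auto simp: depth_three_cores_def depth_three_semigroup_def)
    show "\<forall>S\<in>{S. numerical_semigroup_fm (2 * m + j) m S}. ?sg (?slices S) = S"
      using numerical_semigroup_fm_eq_depth_three_semigroup[OF assms(2)] by auto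
    show "?slices ` {S. numerical_semigroup_fm (2 * m + j) m S} \<subseteq> ?P"
      using numerical_semigroup_fm_depth_three_cores by auto
    show "?sg ` ?P \<subseteq> {S. numerical_semigroup_fm (2 * m + j) m S}"
      using numerical_semigroup_fm_depth_three_semigroup[OF assms] by auto
  qed
  then have "card {S. numerical_semigroup_fm (2 * m + j) m S} = card ?P"
    by (simp add: bij_betw_same_card)
  then show ?thesis
    by (simp add: card_cartesian_product card_Pow)
qed

lemma S_count_eq_card_depth_three_cores:
  assumes "0 < j"
  shows "S_count j = card (depth_three_cores j)"
  using card_numerical_semigroup_fm_depth_three[of j "j + 1"] assms
  by (simp add: S_count_eq algebra_simps)

theorem proposition2p10:
  fixes f l :: nat
  assumes "f \<ge> 1" and "l \<ge> 1"
  shows "((real f - 1) / 2 \<le> real l \<and> real l \<le> real f - 2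
            \<longrightarrow> N_count 2 f l = 2 ^ (f - 2 - l))
       \<and> (\<not> ((real f - 1) / 2 \<le> real l \<and> real l \<le> real f - 2)
            \<longrightarrow> N_count 2 f l = 0)
       \<and> ((real f - 2) / 3 \<le> real l \<and> real l \<le> (real f - 3) / 2
            \<longrightarrow> N_count 3 f l = 2 ^ (l - (f - 2 - 2 * l)) * S_count (f - 2 - 2 * l))
       \<and> (\<not> ((real f - 2) / 3 \<le> real l \<and> real l \<le> (real f - 3) / 2)
            \<longrightarrow> N_count 3 f l = 0)"
proof -
  have range2: "(real f - 1) / 2 \<le> real l \<and> real l \<le> real f - 2
      \<longleftrightarrow> (2 - 1) * (l + 1) < f \<and> f < 2 * (l + 1)"
    by (simp add: field_simps) linarith
  have range3: "(real f - 2) / 3 \<le> real l \<and> real l \<le> (real f - 3) / 2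
      \<longleftrightarrow> (3 - 1) * (l + 1) < f \<and> f < 3 * (l + 1)"
    by (simp add: field_simps) linarith
  have "card {S. numerical_semigroup_fm f (l + 1) S} = 2 ^ (f - 2 - l)"
    if "l + 1 < f" "f < 2 * (l + 1)"
    using card_numerical_semigroup_fm_depth_two[OF that] by simp
  moreover have "card {S. numerical_semigroup_fm f (l + 1) S}
      = 2 ^ (l - (f - 2 - 2 * l)) * S_count (f - 2 - 2 * l)"
    if "2 * (l + 1) < f" "f < 3 * (l + 1)"
  proof -
    define j where "j = f - 2 - 2 * l"
    have "f = 2 * (l + 1) + j" "0 < j" "j < l + 1"
      using that unfolding j_def by auto
    then show ?thesis
      using card_numerical_semigroup_fm_depth_three[of j "l + 1"]
        S_count_eq_card_depth_three_cores[of j]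
      unfolding j_def by simp
  qed
  ultimately show ?thesis
    using N_count_eq[of 2 f l] N_count_eq[of 3 f l] range2 range3 by auto
qed

end
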